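(* Let $P$ be a prime and $D\ge1$. Let $g,r:\mathbb{Z}_P\to\mathbb{R}$ satisfy $\sum_{b\in\mathbb{Z}_P}g(b)=0$, $\sum_b|g(b)|^2=1$, $\sum_b|r(b)|^2=1$, and $C_{g,r}:=\sum_{v\in\mathbb{Z}_P}\mathcal{F}_1[g](v)\overline{\mathcal{F}_1[r](v)}\neq0$. Then for every function $f:\mathbb{Z}_P^D\to\mathbb{R}$ and every $\mathbf{x}\in\mathbb{Z}_P^D$, $$f(\mathbf{x})=C_{g,r}^{-1}\,\mathcal{S}\big[\mathcal{R}[f]\big](\mathbf{x}).$$
   Context: $\mathbb{Z}_P=\{0,\dots,P-1\}$ with arithmetic mod $P$. $\mathcal{F}_1[h](v)=P^{-1/2}\sum_{b\in\mathbb{Z}_P}h(b)e^{-2\pi i vb/P}$. The discrete ridgelet transform is $\mathcal{R}[f](\mathbf{a},b)=P^{-D/2}\sum_{\mathbf{x}\in\mathbb{Z}_P^D}f(\mathbf{x})\,r((\mathbf{a}^\top\mathbf{x}-b)\bmod P)$, and for $w:\mathbb{Z}_P^D\times\mathbb{Z}_P\to\mathbb{C}$ the discretized neural network is $\mathcal{S}[w](\mathbf{x})=P^{-D/2}\sum_{\mathbf{a}\in\mathbb{Z}_P^D,\,b\in\mathbb{Z}_P}w(\mathbf{a},b)\,g((\mathbf{a}^\top\mathbf{x}-b)\bmod P)$. *)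

theory Defs
  imports "HOL-Analysis.Analysis"
begin

text \<open>Z_P is represented as the integers {0..<P}; Z_P^D as functions
  nat => int that map each index i < D into Z_P (extensional: undefined outside {..<D}).\<close>

definition ZP :: "nat \<Rightarrow> int set" where
  "ZP P = {0..<int P}"

definition ZPD :: "nat \<Rightarrow> nat \<Rightarrow> (nat \<Rightarrow> int) set" where
  "ZPD P D = PiE {..<D} (\<lambda>_. ZP P)"

definition dotp :: "nat \<Rightarrow> (nat \<Rightarrow> int) \<Rightarrow> (nat \<Rightarrow> int) \<Rightarrow> int" where
  "dotp D a x = (\<Sum>i<D. a i * x i)"

definition F1 :: "nat \<Rightarrow> (int \<Rightarrow> real) \<Rightarrow> int \<Rightarrow> complex" where
  "F1 P h v = complex_of_real (1 / sqrt (real P)) *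
     (\<Sum>b\<in>ZP P. complex_of_real (h b) *
        exp (- (2 * of_real pi * \<i> * of_int v * of_int b / of_nat P)))"

definition ridgelet :: "nat \<Rightarrow> nat \<Rightarrow> (int \<Rightarrow> real) \<Rightarrow> ((nat \<Rightarrow> int) \<Rightarrow> real)
    \<Rightarrow> (nat \<Rightarrow> int) \<Rightarrow> int \<Rightarrow> real" where
  "ridgelet P D r f a b = (1 / sqrt (real P) ^ D) *
     (\<Sum>x\<in>ZPD P D. f x * r ((dotp D a x - b) mod int P))"

definition Snet :: "nat \<Rightarrow> nat \<Rightarrow> (int \<Rightarrow> real) \<Rightarrow> ((nat \<Rightarrow> int) \<Rightarrow> int \<Rightarrow> complex)
    \<Rightarrow> (nat \<Rightarrow> int) \<Rightarrow> complex" where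
  "Snet P D g w x = complex_of_real (1 / sqrt (real P) ^ D) *
     (\<Sum>a\<in>ZPD P D. \<Sum>b\<in>ZP P. w a b * complex_of_real (g ((dotp D a x - b) mod int P)))"

definition Cgr :: "nat \<Rightarrow> (int \<Rightarrow> real) \<Rightarrow> (int \<Rightarrow> real) \<Rightarrow> complex" where
  "Cgr P g r = (\<Sum>v\<in>ZP P. F1 P g v * cnj (F1 P r v))"

end

theory Submission
  imports Defs
begin

text \<open>Substituting the ridgelet transform into the network gives \<open>P\<^sup>-\<^sup>D\<close> times
  \<open>\<Sum>\<^sub>y f(y) \<Sum>\<^sub>a K((a \<cdot> (y - x)) mod P)\<close>, where \<open>K\<close> is the cyclic cross-correlation
  of \<open>r\<close> and \<open>g\<close>. The values of \<open>K\<close> sum to \<open>(\<Sum> r)(\<Sum> g) = 0\<close>. For \<open>y \<noteq> x\<close> some coordinate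
  of \<open>y - x\<close> is invertible modulo the prime \<open>P\<close>, so translating the matching coordinate of
  \<open>a\<close> shows that \<open>(a \<cdot> (y - x)) mod P\<close> is equidistributed over \<open>Z\<^sub>P\<close> and these terms vanish.
  Only \<open>y = x\<close> survives, contributing \<open>P\<^sup>D K(0) = P\<^sup>D \<Sum>\<^sub>b g(b) r(b)\<close>, and this last sum
  is \<open>C\<^sub>g\<^sub>,\<^sub>r\<close> by Plancherel.\<close>

lemma ZP_eq_image: "ZP P = int ` {..<P}"
  unfolding ZP_def by (simp add: atLeast0LessThan[symmetric] image_int_atLeastLessThan)

lemma finite_ZP [simp]: "finite (ZP P)"
  and card_ZP [simp]: "card (ZP P) = P"
  unfolding ZP_def by auto

lemma mod_in_ZP: "P > 0 \<Longrightarrow> t mod int P \<in> ZP P"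
  by (simp add: ZP_def)

lemma mod_ZP_eq [simp]: "b \<in> ZP P \<Longrightarrow> b mod int P = b"
  by (simp add: ZP_def)

lemma ZP_eq_if_dvd_diff:
  assumes "b \<in> ZP P" "c \<in> ZP P" "int P dvd (c - b)"
  shows "b = c"
proof -
  have "b mod int P = c mod int P"
    using assms(3) by (simp add: mod_eq_dvd_iff dvd_diff_commute)
  with assms(1,2) show ?thesis by simp
qed

lemma finite_ZPD [simp]: "finite (ZPD P D)"
  and card_ZPD [simp]: "card (ZPD P D) = P ^ D"
  unfolding ZPD_def by (simp_all add: finite_PiE card_PiE)

lemma ZPD_component: "a \<in> ZPD P D \<Longrightarrow> j < D \<Longrightarrow> a j \<in> ZP P"
  unfolding ZPD_def by (auto intro: PiE_mem)

lemma dotp_diff: "dotp D a y - dotp D a x = dotp D a (\<lambda>i. y i - x i)"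
  unfolding dotp_def by (simp add: sum_subtractf right_diff_distrib)

lemma dotp_fun_upd:
  assumes "j < D"
  shows "dotp D (a(j := u)) e = dotp D a e + (u - a j) * e j"
proof -
  have "dotp D (a(j := u)) e = u * e j + (\<Sum>i\<in>{..<D} - {j}. a i * e i)"
    using assms unfolding dotp_def by (subst sum.remove[of _ j]) (auto intro!: sum.cong)
  moreover have "dotp D a e = a j * e j + (\<Sum>i\<in>{..<D} - {j}. a i * e i)"
    using assms unfolding dotp_def by (subst sum.remove[of _ j]) auto
  ultimately show ?thesis by (simp add: algebra_simps)
qed

lemma sum_ZP_exp:
  fixes k :: int
  assumes P: "P > 0"
  shows "(\<Sum>v\<in>ZP P. exp (2 * of_real pi * \<i> * of_int v * of_int k / of_nat P)) =
    (if int P dvd k then of_nat P else (0::complex))"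
proof -
  define w where "w = cis (2 * pi * of_int k / real P)"
  have "w ^ v = exp (2 * of_real pi * \<i> * of_int (int v) * of_int k / of_nat P)" for v
  proof -
    have "w ^ v = exp (of_nat v * (\<i> * complex_of_real (2 * pi * of_int k / real P)))"
      unfolding w_def cis_conv_exp exp_of_nat_mult ..
    then show ?thesis by (simp add: field_simps)
  qed
  then have "(\<Sum>v\<in>ZP P. exp (2 * of_real pi * \<i> * of_int v * of_int k / of_nat P)) = (\<Sum>v<P. w ^ v)"
    unfolding ZP_eq_image by (simp add: sum.reindex)
  moreover have "w = 1 \<longleftrightarrow> int P dvd k"
  proof
    assume "w = 1"
    then obtain n :: int where "2 * pi * of_int k / real P = 2 * pi * of_int n"
      by (auto simp: w_def complex_eq_iff cos_one_2pi_int)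
    with P have "of_int k = real P * of_int n" by (simp add: field_simps)
    then have "k = int P * n" by (metis of_int_eq_iff of_int_mult of_int_of_nat_eq)
    then show "int P dvd k" by simp
  next
    assume "int P dvd k"
    then obtain n where "k = int P * n" ..
    with P have "w = cis (2 * pi * of_int n)" unfolding w_def by (simp add: field_simps)
    also have "\<dots> = 1" by (rule cis_multiple_2pi) simp
    finally show "w = 1" .
  qed
  moreover have "w ^ P = 1"
  proof -
    have "w ^ P = cis (real P * (2 * pi * of_int k / real P))"
      unfolding w_def by (rule Complex.DeMoivre)
    also have "\<dots> = 1" using P by (simp add: cis_multiple_2pi)
    finally show ?thesis .
  qed
  ultimately show ?thesis by (auto simp: geometric_sum)
qed

lemma F1_mult_cnj_F1:
  assumes P: "P > 0"
  shows "F1 P g v * cnj (F1 P r v) = (\<Sum>b\<in>ZP P. \<Sum>c\<in>ZP P. complex_of_real (g b * r c) *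
     exp (2 * of_real pi * \<i> * of_int v * of_int (c - b) / of_nat P)) / of_nat P"
proof -
  define e where "e b = exp (2 * of_real pi * \<i> * of_int v * of_int b / of_nat P)" for b :: int
  define s where "s = complex_of_real (1 / sqrt (real P))"
  have "F1 P g v = s * (\<Sum>b\<in>ZP P. complex_of_real (g b) * inverse (e b))"
    unfolding F1_def e_def s_def by (simp add: exp_minus)
  moreover have "cnj (F1 P r v) = s * (\<Sum>c\<in>ZP P. complex_of_real (r c) * e c)"
    unfolding F1_def e_def s_def by (simp add: exp_cnj)
  moreover have e_diff: "inverse (e b) * e c = exp (2 * of_real pi * \<i> * of_int v * of_int (c - b) / of_nat P)" for b c
    unfolding e_def exp_minus[symmetric] mult_exp_exp
    using P by (intro arg_cong[where f=exp]) (simp add: field_simps)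
  ultimately have "F1 P g v * cnj (F1 P r v) =
      (s * s) * ((\<Sum>b\<in>ZP P. complex_of_real (g b) * inverse (e b)) * (\<Sum>c\<in>ZP P. complex_of_real (r c) * e c))"
    by (simp add: mult_ac)
  also have "s * s = 1 / of_nat P"
    using P unfolding s_def by (simp flip: of_real_mult)
  also have "(\<Sum>b\<in>ZP P. complex_of_real (g b) * inverse (e b)) * (\<Sum>c\<in>ZP P. complex_of_real (r c) * e c)
      = (\<Sum>b\<in>ZP P. \<Sum>c\<in>ZP P. complex_of_real (g b * r c) * (inverse (e b) * e c))"
    unfolding sum_product by (simp add: mult_ac)
  finally show ?thesis by (simp add: e_diff)
qed

lemma Cgr_eq_sum_mult:
  assumes P: "P > 0"
  shows "Cgr P g r = complex_of_real (\<Sum>b\<in>ZP P. g b * r b)"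
proof -
  define E where "E v k = exp (2 * of_real pi * \<i> * of_int v * of_int k / of_nat P)" for v k :: int
  have "Cgr P g r = (\<Sum>v\<in>ZP P. \<Sum>b\<in>ZP P. \<Sum>c\<in>ZP P. complex_of_real (g b * r c) * E v (c - b)) / of_nat P"
    unfolding Cgr_def E_def F1_mult_cnj_F1[OF P] by (simp add: sum_divide_distrib)
  also have "(\<Sum>v\<in>ZP P. \<Sum>b\<in>ZP P. \<Sum>c\<in>ZP P. complex_of_real (g b * r c) * E v (c - b)) =
      (\<Sum>b\<in>ZP P. \<Sum>c\<in>ZP P. complex_of_real (g b * r c) * (\<Sum>v\<in>ZP P. E v (c - b)))"
    unfolding sum_distrib_left by (subst sum.swap) (intro sum.cong refl sum.swap)
  also have "\<dots> = (\<Sum>b\<in>ZP P. \<Sum>c\<in>ZP P. if b = c then complex_of_real (g b * r b) * of_nat P else 0)"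
  proof (intro sum.cong refl)
    fix b c assume "b \<in> ZP P" "c \<in> ZP P"
    then have "(\<Sum>v\<in>ZP P. E v (c - b)) = (if b = c then of_nat P else 0)"
      unfolding E_def sum_ZP_exp[OF P] by (auto dest: ZP_eq_if_dvd_diff)
    then show "complex_of_real (g b * r c) * (\<Sum>v\<in>ZP P. E v (c - b)) =
        (if b = c then complex_of_real (g b * r b) * of_nat P else 0)" by simp
  qed
  finally show ?thesis using P by (simp add: sum_divide_distrib)
qed

lemma sum_ZP_affine_reindex:
  fixes h :: "int \<Rightarrow> 'a::comm_monoid_add"
  assumes P: "P > 0" and d: "coprime d (int P)"
  shows "(\<Sum>t\<in>ZP P. h ((s + t * d) mod int P)) = (\<Sum>t\<in>ZP P. h t)"
proof -
  define f where "f t = (s + t * d) mod int P" for t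
  have "inj_on f (ZP P)"
  proof (rule inj_onI)
    fix t1 t2 assume t: "t1 \<in> ZP P" "t2 \<in> ZP P" and "f t1 = f t2"
    then have "int P dvd (t1 - t2) * d"
      unfolding f_def by (simp add: mod_eq_dvd_iff algebra_simps)
    then have "int P dvd (t1 - t2)"
      using d by (simp add: coprime_dvd_mult_left_iff coprime_commute)
    then show "t1 = t2" using ZP_eq_if_dvd_diff[OF t(2,1)] by simp
  qed
  moreover have "f ` ZP P = ZP P"
    using P by (intro endo_inj_surj calculation) (auto simp: f_def mod_in_ZP)
  ultimately show ?thesis
    using sum.reindex[of f "ZP P" h] by (simp add: f_def)
qed

lemma sum_ZPD_shift_coord:
  assumes P: "P > 0" and j: "j < D"
  shows "(\<Sum>a\<in>ZPD P D. h (a(j := (a j + c) mod int P))) = (\<Sum>a\<in>ZPD P D. h a)"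
proof (rule sum.reindex_bij_witness[where i="\<lambda>a. a(j := (a j - c) mod int P)"
      and j="\<lambda>a. a(j := (a j + c) mod int P)"])
  fix a assume a: "a \<in> ZPD P D"
  then have "a j \<in> ZP P" using j by (rule ZPD_component)
  then show "(\<lambda>a. a(j := (a j - c) mod int P)) ((\<lambda>a. a(j := (a j + c) mod int P)) a) = a"
    and "(\<lambda>a. a(j := (a j + c) mod int P)) ((\<lambda>a. a(j := (a j - c) mod int P)) a) = a"
    by (auto simp: mod_simps)
  show "(\<lambda>a. a(j := (a j + c) mod int P)) a \<in> ZPD P D"
    and "(\<lambda>a. a(j := (a j - c) mod int P)) a \<in> ZPD P D"
    using a j P by (auto simp: ZPD_def PiE_iff mod_in_ZP extensional_def)
qed simp

lemma sum_ZPD_dotp_mod: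
  fixes K :: "int \<Rightarrow> 'a::comm_semiring_1"
  assumes P: "P > 0" and j: "j < D" and e: "coprime (e j) (int P)"
  shows "of_nat P * (\<Sum>a\<in>ZPD P D. K (dotp D a e mod int P)) = of_nat P ^ D * (\<Sum>t\<in>ZP P. K t)"
proof -
  define X where "X = (\<Sum>a\<in>ZPD P D. K (dotp D a e mod int P))"
  have X_shift: "X = (\<Sum>a\<in>ZPD P D. K ((dotp D a e + c * e j) mod int P))" for c
  proof -
    have "dotp D (a(j := (a j + c) mod int P)) e mod int P = (dotp D a e + c * e j) mod int P" for a
    proof -
      have "dotp D (a(j := (a j + c) mod int P)) e =
          (dotp D a e + c * e j) + (- ((a j + c) div int P) * e j) * int P"
        unfolding dotp_fun_upd[OF j] by (simp add: minus_div_mult_eq_mod[symmetric] algebra_simps)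
      then show ?thesis by (simp only: mod_mult_self1)
    qed
    then show ?thesis
      unfolding X_def using sum_ZPD_shift_coord[OF P j, of "\<lambda>a. K (dotp D a e mod int P)" c] by simp
  qed
  have "of_nat P * X = (\<Sum>c\<in>ZP P. \<Sum>a\<in>ZPD P D. K ((dotp D a e + c * e j) mod int P))"
    using X_shift by simp
  also have "\<dots> = (\<Sum>a\<in>ZPD P D. \<Sum>c\<in>ZP P. K ((dotp D a e + c * e j) mod int P))"
    by (rule sum.swap)
  also have "\<dots> = of_nat P ^ D * (\<Sum>t\<in>ZP P. K t)"
    by (simp add: sum_ZP_affine_reindex[OF P e])
  finally show ?thesis unfolding X_def .
qed

definition cyclic_corr :: "nat \<Rightarrow> (int \<Rightarrow> real) \<Rightarrow> (int \<Rightarrow> real) \<Rightarrow> int \<Rightarrow> real" where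
  "cyclic_corr P r g t = (\<Sum>c\<in>ZP P. r ((t + c) mod int P) * g c)"

lemma cyclic_corr_0: "cyclic_corr P r g 0 = (\<Sum>b\<in>ZP P. g b * r b)"
  unfolding cyclic_corr_def by (intro sum.cong refl) (simp add: mult.commute)

lemma sum_cyclic_corr:
  assumes P: "P > 0"
  shows "(\<Sum>t\<in>ZP P. cyclic_corr P r g t) = (\<Sum>t\<in>ZP P. r t) * (\<Sum>c\<in>ZP P. g c)"
proof -
  have "(\<Sum>t\<in>ZP P. cyclic_corr P r g t) = (\<Sum>c\<in>ZP P. g c * (\<Sum>t\<in>ZP P. r ((c + t * 1) mod int P)))"
    unfolding cyclic_corr_def by (subst sum.swap) (simp add: sum_distrib_left mult_ac add.commute)
  also have "\<dots> = (\<Sum>c\<in>ZP P. g c * (\<Sum>t\<in>ZP P. r t))"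
    by (simp add: sum_ZP_affine_reindex[OF P, of 1, simplified])
  finally show ?thesis by (simp add: sum_distrib_right mult.commute)
qed

lemma sum_ZP_mult_shifted:
  assumes P: "P > 0"
  shows "(\<Sum>b\<in>ZP P. r ((u - b) mod int P) * g ((w - b) mod int P)) = cyclic_corr P r g ((u - w) mod int P)"
proof -
  define h where "h c = r (((u - w) mod int P + c) mod int P) * g c" for c
  have "(\<Sum>b\<in>ZP P. r ((u - b) mod int P) * g ((w - b) mod int P)) = (\<Sum>b\<in>ZP P. h ((w + b * -1) mod int P))"
    unfolding h_def by (intro sum.cong refl) (simp add: mod_simps)
  also have "\<dots> = (\<Sum>c\<in>ZP P. h c)"
    using P by (intro sum_ZP_affine_reindex) simp_all
  finally show ?thesis unfolding h_def cyclic_corr_def .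
qed

lemma sum_ZPD_cyclic_corr_dotp:
  assumes p: "prime P" and x: "x \<in> ZPD P D" and y: "y \<in> ZPD P D" and g: "(\<Sum>b\<in>ZP P. g b) = 0"
  shows "(\<Sum>a\<in>ZPD P D. cyclic_corr P r g (dotp D a (\<lambda>i. y i - x i) mod int P)) =
    (if y = x then real P ^ D * (\<Sum>b\<in>ZP P. g b * r b) else 0)"
proof (cases "y = x")
  case True
  then show ?thesis by (simp add: dotp_def cyclic_corr_0)
next
  case False
  then obtain j where j: "j < D" "x j \<noteq> y j"
    using PiE_ext[of x "{..<D}" "\<lambda>_. ZP P" y] x y unfolding ZPD_def by auto
  have P: "P > 0" using p by (simp add: prime_gt_0_nat)
  have "\<not> int P dvd (y j - x j)"
    using ZP_eq_if_dvd_diff ZPD_component x y j by blast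
  then have "coprime (y j - x j) (int P)"
    using p by (subst coprime_commute) (simp add: prime_imp_coprime)
  then have "real P * (\<Sum>a\<in>ZPD P D. cyclic_corr P r g (dotp D a (\<lambda>i. y i - x i) mod int P)) =
      real P ^ D * (\<Sum>t\<in>ZP P. cyclic_corr P r g t)"
    using sum_ZPD_dotp_mod[OF P j(1), of "\<lambda>i. y i - x i"] by simp
  also have "\<dots> = 0"
    by (simp add: sum_cyclic_corr[OF P] g)
  finally show ?thesis using P False by simp
qed

lemma Snet_ridgelet:
  assumes p: "prime P" and g: "(\<Sum>b\<in>ZP P. g b) = 0" and x: "x \<in> ZPD P D"
  shows "Snet P D g (\<lambda>a b. complex_of_real (ridgelet P D r f a b)) x =
    complex_of_real (f x * (\<Sum>b\<in>ZP P. g b * r b))"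
proof -
  have P: "P > 0" using p by (simp add: prime_gt_0_nat)
  define s where "s = 1 / sqrt (real P) ^ D"
  define G where "G = (\<Sum>b\<in>ZP P. g b * r b)"
  have "Snet P D g (\<lambda>a b. complex_of_real (ridgelet P D r f a b)) x =
      complex_of_real (s * (\<Sum>a\<in>ZPD P D. \<Sum>b\<in>ZP P. ridgelet P D r f a b * g ((dotp D a x - b) mod int P)))"
    unfolding Snet_def s_def by simp
  also have "(\<Sum>a\<in>ZPD P D. \<Sum>b\<in>ZP P. ridgelet P D r f a b * g ((dotp D a x - b) mod int P)) =
      s * (\<Sum>a\<in>ZPD P D. \<Sum>b\<in>ZP P. \<Sum>y\<in>ZPD P D.
        f y * (r ((dotp D a y - b) mod int P) * g ((dotp D a x - b) mod int P)))"
    unfolding ridgelet_def s_def by (simp add: sum_distrib_left sum_distrib_right mult_ac)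
  also have "(\<Sum>a\<in>ZPD P D. \<Sum>b\<in>ZP P. \<Sum>y\<in>ZPD P D.
        f y * (r ((dotp D a y - b) mod int P) * g ((dotp D a x - b) mod int P))) =
      (\<Sum>y\<in>ZPD P D. \<Sum>a\<in>ZPD P D. \<Sum>b\<in>ZP P.
        f y * (r ((dotp D a y - b) mod int P) * g ((dotp D a x - b) mod int P)))"
    by (rule sym, subst sum.swap, intro sum.cong refl sum.swap)
  also have "\<dots> = (\<Sum>y\<in>ZPD P D. f y * (\<Sum>a\<in>ZPD P D. cyclic_corr P r g (dotp D a (\<lambda>i. y i - x i) mod int P)))"
    by (simp add: sum_distrib_left[symmetric] sum_ZP_mult_shifted[OF P] dotp_diff)
  also have "\<dots> = (\<Sum>y\<in>ZPD P D. if y = x then f x * (real P ^ D * G) else 0)"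
    by (intro sum.cong refl) (simp add: sum_ZPD_cyclic_corr_dotp[OF p x _ g] G_def)
  also have "s * (s * \<dots>) = f x * G"
  proof -
    have "s * s * real P ^ D = 1"
      unfolding s_def using P by (simp add: power_mult_distrib[symmetric] field_simps)
    with x show ?thesis by (simp add: algebra_simps)
  qed
  finally show ?thesis unfolding G_def .
qed

theorem theorem2:
  fixes P D :: nat and g r :: "int \<Rightarrow> real"
  assumes "prime P" and "D \<ge> 1"
    and "(\<Sum>b\<in>ZP P. g b) = 0"
    and "(\<Sum>b\<in>ZP P. \<bar>g b\<bar>^2) = 1"
    and "(\<Sum>b\<in>ZP P. \<bar>r b\<bar>^2) = 1"
    and "Cgr P g r \<noteq> 0"
  shows "\<forall>f :: (nat \<Rightarrow> int) \<Rightarrow> real. \<forall>x\<in>ZPD P D.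
           complex_of_real (f x) =
             inverse (Cgr P g r) *
             Snet P D g (\<lambda>a b. complex_of_real (ridgelet P D r f a b)) x"
proof (intro allI ballI)
  fix f :: "(nat \<Rightarrow> int) \<Rightarrow> real" and x assume x: "x \<in> ZPD P D"
  have C: "Cgr P g r = complex_of_real (\<Sum>b\<in>ZP P. g b * r b)"
    using assms(1) by (simp add: Cgr_eq_sum_mult prime_gt_0_nat)
  show "complex_of_real (f x) = inverse (Cgr P g r) * Snet P D g (\<lambda>a b. complex_of_real (ridgelet P D r f a b)) x"
    unfolding Snet_ridgelet[OF assms(1,3) x] using assms(6) by (simp add: C field_simps)
qed

end
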